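(* Assume the hypotheses of the existence theorem stated in the context, let $\alpha=\max\{\|H(X)\|:X\in N_\varepsilon(\mathcal P)\}$, and fix $\mu\ge\dfrac{\Lambda+(L_0+L_1)\alpha}{1-C_0-C_1}$. Let $\delta>0$ and let $W=(w_1,\dots,w_n)\in C^1([-\delta,\delta];\mathbb R^n)$ with $w_1([-\delta,\delta])\subseteq[-\delta,\delta]$ satisfy $W'(t)=H(t;W(t),W(w_1(t));W'(t),W'(w_1(t)))$ for $|t|\le\delta$, $W(0)=0$, $W'(0)=P$, and $(t;W(t),W(w_1(t));W'(t),W'(w_1(t)))\in N_\varepsilon(\mathcal P)$ for $|t|\le\delta$. Then $W\in\mathcal C(\delta)$.
   Context: Setting (existence theorem hypotheses): $\|\cdot\|$ is a norm on $\mathbb R^n$; $H=(h_1,\dots,h_n)$ is continuous from an open subset of $\mathbb R^{4n+1}$ to $\mathbb R^n$, written $H(t;\zeta^0,\zeta^1;\xi^0,\xi^1)$; $P=(p_1,\dots,p_n)$ satisfies $P=H(0;\mathbf0,\mathbf0;P,P)$ and $|p_1|\le1$; $\mathcal P=(0;\mathbf0,\mathbf0;P,P)$; $N_\varepsilon(\mathcal P)=\{|t|+\|\zeta^0\|+\|\zeta^1\|+\|\xi^0-P\|+\|\xi^1-P\|\le\varepsilon\}$ lies in the domain, and on it: $H$ is $\Lambda$-Lipschitz in $t$; $\|H(t;\bar\zeta^0,\bar\zeta^1;\xi^0,\xi^1)-H(t;\zeta^0,\zeta^1;\xi^0,\xi^1)\|\le L_0\|\bar\zeta^0-\zeta^0\|+L_1\|\bar\zeta^1-\zeta^1\|$;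 $\|H(t;\zeta^0,\zeta^1;\bar\xi^0,\bar\xi^1)-H(t;\zeta^0,\zeta^1;\xi^0,\xi^1)\|\le C_0\|\bar\xi^0-\xi^0\|+C_1\|\bar\xi^1-\xi^1\|$ with $C_0+C_1<1$; and $|h_1|\le1$. For $Z=(z_1,\dots,z_n)$ let $V_Z(t)=(t;Z(t),Z(z_1(t));Z'(t),Z'(z_1(t)))$. The set $\mathcal C(\delta)$ consists of all $Z\in C^1([-\delta,\delta];\mathbb R^n)$ such that: $Z(0)=0$, $Z'(0)=P$; $|z_1(t)|\le|t|$; $\|Z(t)-Z(\bar t)\|\le\alpha|t-\bar t|$; $|z_1(t)-z_1(\bar t)|\le|t-\bar t|$; $\|Z'(t)-Z'(\bar t)\|\le\mu|t-\bar t|$; and $V_Z(t)\in N_\varepsilon(\mathcal P)$, for all $t,\bar t\in[-\delta,\delta]$. *)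

theory Defs
  imports "HOL-Analysis.Analysis"
begin

text \<open>Vectors in R^n are modelled as real^'n ('n a finite index type); the distinguished
coordinate i1 plays the role of the first coordinate.\<close>

definition is_norm :: "('a::real_vector \<Rightarrow> real) \<Rightarrow> bool" where
  "is_norm nrm \<longleftrightarrow>
     (\<forall>x. 0 \<le> nrm x) \<and> (\<forall>x. nrm x = 0 \<longleftrightarrow> x = 0) \<and>
     (\<forall>c x. nrm (c *\<^sub>R x) = \<bar>c\<bar> * nrm x) \<and>
     (\<forall>x y. nrm (x + y) \<le> nrm x + nrm y)"

definition Nbhd ::
  "('a::real_vector \<Rightarrow> real) \<Rightarrow> 'a \<Rightarrow> real \<Rightarrow> (real \<times> 'a \<times> 'a \<times> 'a \<times> 'a) set" where
  "Nbhd nrm P eps = {(t, z0, z1, x0, x1).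
      \<bar>t\<bar> + nrm z0 + nrm z1 + nrm (x0 - P) + nrm (x1 - P) \<le> eps}"

definition C1_on :: "real \<Rightarrow> (real \<Rightarrow> 'a::real_normed_vector) \<Rightarrow> (real \<Rightarrow> 'a) \<Rightarrow> bool" where
  "C1_on delta Z Z' \<longleftrightarrow>
     (\<forall>t\<in>{-delta..delta}. (Z has_vector_derivative Z' t) (at t within {-delta..delta})) \<and>
     continuous_on {-delta..delta} Z'"

definition classC ::
  "(real^'n \<Rightarrow> real) \<Rightarrow> real^'n \<Rightarrow> real \<Rightarrow> real \<Rightarrow> real \<Rightarrow> 'n \<Rightarrow> real
    \<Rightarrow> (real \<Rightarrow> real^'n) \<Rightarrow> bool" where
  "classC nrm P eps alpha mu i1 delta Z \<longleftrightarrow>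
     (\<exists>Z'. C1_on delta Z Z' \<and>
        Z 0 = 0 \<and> Z' 0 = P \<and>
        (\<forall>t\<in>{-delta..delta}. \<bar>Z t $ i1\<bar> \<le> \<bar>t\<bar>) \<and>
        (\<forall>t\<in>{-delta..delta}. \<forall>s\<in>{-delta..delta}. nrm (Z t - Z s) \<le> alpha * \<bar>t - s\<bar>) \<and>
        (\<forall>t\<in>{-delta..delta}. \<forall>s\<in>{-delta..delta}. \<bar>Z t $ i1 - Z s $ i1\<bar> \<le> \<bar>t - s\<bar>) \<and>
        (\<forall>t\<in>{-delta..delta}. \<forall>s\<in>{-delta..delta}. nrm (Z' t - Z' s) \<le> mu * \<bar>t - s\<bar>) \<and>
        (\<forall>t\<in>{-delta..delta}.
           (t, Z t, Z (Z t $ i1), Z' t, Z' (Z t $ i1)) \<in> Nbhd nrm P eps))"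

end

theory Submission
  imports Defs
begin

text \<open>Along the solution \<open>W' = H(\<dots>)\<close>, so \<open>nrm (W' t) \<le> \<alpha>\<close> and \<open>\<bar>w\<^sub>1' t\<bar> \<le> 1\<close>, and the mean value
  inequality (for an arbitrary norm, via supporting functionals) gives the Lipschitz bounds for \<open>W\<close>
  and \<open>w\<^sub>1\<close>. For \<open>W'\<close>, the three partial Lipschitz conditions on \<open>H\<close> are first combined into a
  joint one on the convex neighbourhood \<open>N\<^sub>\<epsilon>(\<P>)\<close>: between points with some room to the boundary
  one passes through intermediate points, the general case follows by shrinking towards the
  centre and continuity. Inserting the equation, the oscillation \<open>q(h)\<close> of \<open>W'\<close> over pairs at
  distance at most \<open>h\<close> satisfies \<open>q(h) \<le> (\<Lambda> + (L\<^sub>0 + L\<^sub>1) \<alpha>) h + (C\<^sub>0 + C\<^sub>1) q(h)\<close>, whence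
  \<open>q(h) \<le> \<mu> h\<close>.\<close>

section \<open>Norms given by axioms\<close>

context
  fixes nrm :: "'a::real_vector \<Rightarrow> real"
  assumes norm: "is_norm nrm"
begin

lemma is_norm_nonneg: "0 \<le> nrm x"
  using norm by (simp add: is_norm_def)

lemma is_norm_eq_zero_iff: "nrm x = 0 \<longleftrightarrow> x = 0"
  using norm by (simp add: is_norm_def)

lemma is_norm_scaleR: "nrm (c *\<^sub>R x) = \<bar>c\<bar> * nrm x"
  using norm by (simp add: is_norm_def)

lemma is_norm_triangle: "nrm (x + y) \<le> nrm x + nrm y"
  using norm by (simp add: is_norm_def)

lemma is_norm_zero: "nrm 0 = 0"
  by (simp add: is_norm_eq_zero_iff)

lemma is_norm_minus: "nrm (- x) = nrm x"
  using is_norm_scaleR[of "-1" x] by simp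

lemma is_norm_minus_commute: "nrm (x - y) = nrm (y - x)"
  using is_norm_minus[of "x - y"] by simp

lemma is_norm_triangle_diff: "nrm (x - y) \<le> nrm (x - z) + nrm (z - y)"
  using is_norm_triangle[of "x - z" "z - y"] by simp

lemma is_norm_triangle_ineq: "nrm x \<le> nrm y + nrm (x - y)"
  using is_norm_triangle[of y "x - y"] by simp

lemma is_norm_diff_le:
  assumes "nrm x \<le> A" "nrm y \<le> A"
  shows "nrm (x - y) \<le> 2 * A"
  using is_norm_triangle[of x "- y"] is_norm_minus[of y] assms by simp

lemma is_norm_sum:
  assumes "finite S"
  shows "nrm (sum f S) \<le> (\<Sum>i\<in>S. nrm (f i))"
  using assms
proof (induction S rule: finite_induct)
  case (insert x F)
  then show ?case using is_norm_triangle[of "f x" "sum f F"] by simp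
qed (simp add: is_norm_zero)

lemma is_norm_convex_ball: "convex {x. nrm x < r}"
proof (intro convexI, simp)
  fix x y :: 'a and u v :: real
  assume "nrm x < r" "nrm y < r" "0 \<le> u" "0 \<le> v" "u + v = 1"
  then have "u * nrm x + v * nrm y < r" by (rule convex_bound_lt)
  moreover have "nrm (u *\<^sub>R x + v *\<^sub>R y) \<le> u * nrm x + v * nrm y"
    using is_norm_triangle[of "u *\<^sub>R x" "v *\<^sub>R y"] \<open>0 \<le> u\<close> \<open>0 \<le> v\<close> by (simp add: is_norm_scaleR)
  ultimately show "nrm (u *\<^sub>R x + v *\<^sub>R y) < r" by linarith
qed

end

lemma is_norm_le_const_norm:
  fixes nrm :: "'a::euclidean_space \<Rightarrow> real"
  assumes norm: "is_norm nrm"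
  obtains K where "\<And>x. nrm x \<le> K * norm x"
proof
  let ?K = "\<Sum>b\<in>Basis. nrm b"
  fix x :: 'a
  have "nrm x = nrm (\<Sum>b\<in>Basis. (x \<bullet> b) *\<^sub>R b)"
    by (simp add: euclidean_representation)
  also have "\<dots> \<le> (\<Sum>b\<in>Basis. \<bar>x \<bullet> b\<bar> * nrm b)"
    using is_norm_sum[OF norm, of Basis "\<lambda>b. (x \<bullet> b) *\<^sub>R b"] by (simp add: is_norm_scaleR[OF norm])
  also have "\<dots> \<le> (\<Sum>b\<in>Basis. norm x * nrm b)"
    by (intro sum_mono mult_right_mono Basis_le_norm is_norm_nonneg[OF norm])
  also have "\<dots> = ?K * norm x" by (simp add: sum_distrib_left mult.commute)
  finally show "nrm x \<le> ?K * norm x" .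
qed

lemma tendsto_is_norm:
  fixes nrm :: "'a::euclidean_space \<Rightarrow> real"
  assumes norm: "is_norm nrm" and lim: "(f \<longlongrightarrow> l) F"
  shows "((\<lambda>x. nrm (f x)) \<longlongrightarrow> nrm l) F"
proof -
  obtain K where K: "\<And>x. nrm x \<le> K * norm x" using is_norm_le_const_norm[OF norm] by blast
  have "((\<lambda>x. f x - l) \<longlongrightarrow> 0) F" using lim by (simp add: LIM_zero)
  moreover have "\<forall>\<^sub>F x in F. norm (nrm (f x) - nrm l) \<le> norm (f x - l) * K"
  proof (intro always_eventually allI)
    fix x
    have "\<bar>nrm (f x) - nrm l\<bar> \<le> nrm (f x - l)"
      using is_norm_triangle_ineq[OF norm, of "f x" l] is_norm_triangle_ineq[OF norm, of l "f x"]
        is_norm_minus_commute[OF norm, of l "f x"] by linarith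
    then show "norm (nrm (f x) - nrm l) \<le> norm (f x - l) * K"
      using K[of "f x - l"] by (simp add: mult.commute)
  qed
  ultimately have "((\<lambda>x. nrm (f x) - nrm l) \<longlongrightarrow> 0) F" by (rule tendsto_0_le)
  then show ?thesis by (simp add: LIM_zero_iff)
qed

text \<open>Separate \<open>v\<close> from the open ball of radius \<open>nrm v\<close>, then rescale the normal.\<close>

lemma is_norm_support_functional:
  fixes nrm :: "'a::euclidean_space \<Rightarrow> real"
  assumes norm: "is_norm nrm"
  obtains a where "\<And>x. a \<bullet> x \<le> nrm x" "a \<bullet> v = nrm v"
proof (cases "v = 0")
  case True
  then show ?thesis using that[of 0] by (simp add: is_norm_nonneg[OF norm] is_norm_zero[OF norm])
next
  case False
  then have nv: "nrm v > 0"
    using is_norm_nonneg[OF norm, of v] is_norm_eq_zero_iff[OF norm, of v] by linarith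
  let ?S = "{x. nrm x < nrm v}"
  note is_norm_convex_ball[OF norm, of "nrm v"]
  moreover have "0 \<in> ?S" using nv by (simp add: is_norm_zero[OF norm])
  ultimately obtain a b where "a \<noteq> 0" and below: "\<And>x. nrm x < nrm v \<Longrightarrow> a \<bullet> x \<le> b"
    and "a \<bullet> v \<ge> b"
    using separating_hyperplane_sets[OF _ convex_singleton, of ?S v] by force
  have dominated: "a \<bullet> x \<le> b / nrm v * nrm x" for x
  proof (cases "x = 0")
    case False
    then have nx: "nrm x > 0"
      using is_norm_nonneg[OF norm, of x] is_norm_eq_zero_iff[OF norm, of x] by linarith
    have "nrm v / nrm x * (a \<bullet> x) \<le> b"
    proof (rule field_le_mult_one_interval)
      fix z :: real assume z: "0 < z" "z < 1"
      have "nrm ((z * nrm v / nrm x) *\<^sub>R x) < nrm v"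
        using z nx nv by (simp add: is_norm_scaleR[OF norm])
      then show "z * (nrm v / nrm x * (a \<bullet> x)) \<le> b" using below by fastforce
    qed
    then show ?thesis using nx nv by (simp add: field_simps)
  qed (use below nv in \<open>simp add: is_norm_zero[OF norm]\<close>)
  have "b > 0"
  proof (rule ccontr)
    assume "\<not> b > 0"
    then have "a \<bullet> a \<le> 0"
      using dominated[of a] nv is_norm_nonneg[OF norm, of a] by (smt (verit) divide_nonpos_pos mult_nonpos_nonneg)
    with \<open>a \<noteq> 0\<close> show False by (metis inner_gt_zero_iff not_le)
  qed
  have "a \<bullet> v = b" using dominated[of v] \<open>a \<bullet> v \<ge> b\<close> nv by simp
  show ?thesis
  proof (rule that[of "(nrm v / b) *\<^sub>R a"])
    fix x
    show "(nrm v / b) *\<^sub>R a \<bullet> x \<le> nrm x"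
      using mult_left_mono[OF dominated[of x], of "nrm v / b"] nv \<open>b > 0\<close> by simp
  qed (use \<open>a \<bullet> v = b\<close> \<open>b > 0\<close> in simp)
qed

lemma real_mean_value_bound:
  fixes f f' :: "real \<Rightarrow> real"
  assumes "\<And>u. u \<in> {a..b} \<Longrightarrow> (f has_vector_derivative f' u) (at u within {a..b})"
    and "\<And>u. u \<in> {a..b} \<Longrightarrow> \<bar>f' u\<bar> \<le> B"
    and "x \<in> {a..b}" "y \<in> {a..b}"
  shows "\<bar>f x - f y\<bar> \<le> B * \<bar>x - y\<bar>"
  using field_differentiable_bound[OF convex_real_interval(5), of a b f f' B x y] assms
  by (simp add: has_real_derivative_iff_has_vector_derivative)

lemma vec_nth_mean_value_bound:
  fixes W W' :: "real \<Rightarrow> real^'n"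
  assumes "\<And>u. u \<in> {a..b} \<Longrightarrow> (W has_vector_derivative W' u) (at u within {a..b})"
    and "\<And>u. u \<in> {a..b} \<Longrightarrow> \<bar>W' u $ i\<bar> \<le> B"
    and "x \<in> {a..b}" "y \<in> {a..b}"
  shows "\<bar>W x $ i - W y $ i\<bar> \<le> B * \<bar>x - y\<bar>"
proof (rule real_mean_value_bound[where f = "\<lambda>u. W u $ i" and f' = "\<lambda>u. W' u $ i"])
  fix u assume "u \<in> {a..b}"
  then show "((\<lambda>u. W u $ i) has_vector_derivative W' u $ i) (at u within {a..b})"
    by (rule bounded_linear.has_vector_derivative[OF bounded_linear_vec_nth assms(1)])
qed (use assms in auto)

text \<open>The mean value inequality for an arbitrary norm reduces to the real case through a
  supporting functional at \<open>W x - W y\<close>.\<close>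

lemma is_norm_mean_value_bound:
  fixes nrm :: "'a::euclidean_space \<Rightarrow> real" and W W' :: "real \<Rightarrow> 'a"
  assumes norm: "is_norm nrm"
    and deriv: "\<And>u. u \<in> {a..b} \<Longrightarrow> (W has_vector_derivative W' u) (at u within {a..b})"
    and bound: "\<And>u. u \<in> {a..b} \<Longrightarrow> nrm (W' u) \<le> B"
    and "x \<in> {a..b}" "y \<in> {a..b}"
  shows "nrm (W x - W y) \<le> B * \<bar>x - y\<bar>"
proof -
  obtain c where c: "\<And>z. c \<bullet> z \<le> nrm z" "c \<bullet> (W x - W y) = nrm (W x - W y)"
    using is_norm_support_functional[OF norm] by metis
  have "\<bar>c \<bullet> W x - c \<bullet> W y\<bar> \<le> B * \<bar>x - y\<bar>"
  proof (rule real_mean_value_bound[where f = "\<lambda>u. c \<bullet> W u" and f' = "\<lambda>u. c \<bullet> W' u"])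
    fix u assume u: "u \<in> {a..b}"
    show "((\<lambda>u. c \<bullet> W u) has_vector_derivative c \<bullet> W' u) (at u within {a..b})"
      by (rule bounded_linear.has_vector_derivative[OF bounded_linear_inner_right deriv[OF u]])
    show "\<bar>c \<bullet> W' u\<bar> \<le> B"
      using c(1)[of "W' u"] c(1)[of "- W' u"] bound[OF u] is_norm_minus[OF norm] by simp
  qed (use assms in auto)
  then show ?thesis using c(2) by (simp add: inner_diff_right)
qed

section \<open>Solving an implicit Lipschitz bound\<close>

text \<open>Let \<open>q\<close> be the largest oscillation of \<open>g\<close> over pairs at distance at most \<open>h\<close>; the implicit
  bound gives \<open>q \<le> (\<Lambda> + (L0 + L1) * \<alpha>) * h + (C0 + C1) * q\<close>, which can be solved for \<open>q\<close>.\<close>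

lemma lipschitz_from_implicit_bound:
  fixes nrm :: "'a::minus \<Rightarrow> real" and f g :: "real \<Rightarrow> 'a" and \<sigma> :: "real \<Rightarrow> real"
  assumes \<sigma>_maps: "\<And>t. t \<in> I \<Longrightarrow> \<sigma> t \<in> I"
    and \<sigma>_lip: "\<And>t s. t \<in> I \<Longrightarrow> s \<in> I \<Longrightarrow> \<bar>\<sigma> t - \<sigma> s\<bar> \<le> \<bar>t - s\<bar>"
    and f_lip: "\<And>t s. t \<in> I \<Longrightarrow> s \<in> I \<Longrightarrow> nrm (f t - f s) \<le> \<alpha> * \<bar>t - s\<bar>"
    and g_bdd: "\<And>t s. t \<in> I \<Longrightarrow> s \<in> I \<Longrightarrow> nrm (g t - g s) \<le> B"
    and g_implicit: "\<And>t s. t \<in> I \<Longrightarrow> s \<in> I \<Longrightarrow> nrm (g t - g s) \<le> \<Lambda> * \<bar>t - s\<bar>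
        + L0 * nrm (f t - f s) + L1 * nrm (f (\<sigma> t) - f (\<sigma> s))
        + C0 * nrm (g t - g s) + C1 * nrm (g (\<sigma> t) - g (\<sigma> s))"
    and nonneg: "\<alpha> \<ge> 0" "\<Lambda> \<ge> 0" "L0 \<ge> 0" "L1 \<ge> 0" "C0 \<ge> 0" "C1 \<ge> 0"
    and contraction: "C0 + C1 < 1"
    and mu: "(\<Lambda> + (L0 + L1) * \<alpha>) / (1 - C0 - C1) \<le> mu"
    and ts: "t \<in> I" "s \<in> I"
  shows "nrm (g t - g s) \<le> mu * \<bar>t - s\<bar>"
proof -
  define h where "h = \<bar>t - s\<bar>"
  define Q where "Q = {(a, b). a \<in> I \<and> b \<in> I \<and> \<bar>a - b\<bar> \<le> h}"
  define q where "q = (SUP (a, b)\<in>Q. nrm (g a - g b))"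
  have "bdd_above ((\<lambda>(a, b). nrm (g a - g b)) ` Q)"
    using g_bdd by (intro bdd_aboveI2[where M = B]) (auto simp: Q_def)
  then have le_q: "nrm (g a - g b) \<le> q" if "a \<in> I" "b \<in> I" "\<bar>a - b\<bar> \<le> h" for a b
    using that cSUP_upper[of "(a, b)" Q "\<lambda>(a, b). nrm (g a - g b)"] by (simp add: q_def Q_def)
  have "nrm (g a - g b) \<le> (\<Lambda> + (L0 + L1) * \<alpha>) * h + (C0 + C1) * q"
    if ab: "a \<in> I" "b \<in> I" "\<bar>a - b\<bar> \<le> h" for a b
  proof -
    have \<sigma>ab: "\<sigma> a \<in> I" "\<sigma> b \<in> I" "\<bar>\<sigma> a - \<sigma> b\<bar> \<le> h"
      using \<sigma>_maps \<sigma>_lip[of a b] ab by auto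
    have "\<alpha> * \<bar>a - b\<bar> \<le> \<alpha> * h" "\<alpha> * \<bar>\<sigma> a - \<sigma> b\<bar> \<le> \<alpha> * h"
      using ab \<sigma>ab nonneg by (simp_all add: mult_left_mono)
    then have "nrm (f a - f b) \<le> \<alpha> * h" "nrm (f (\<sigma> a) - f (\<sigma> b)) \<le> \<alpha> * h"
      using f_lip[of a b] f_lip[of "\<sigma> a" "\<sigma> b"] ab \<sigma>ab by linarith+
    then have "\<Lambda> * \<bar>a - b\<bar> + L0 * nrm (f a - f b) + L1 * nrm (f (\<sigma> a) - f (\<sigma> b))
        + C0 * nrm (g a - g b) + C1 * nrm (g (\<sigma> a) - g (\<sigma> b))
        \<le> \<Lambda> * h + L0 * (\<alpha> * h) + L1 * (\<alpha> * h) + C0 * q + C1 * q"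
      using ab \<sigma>ab nonneg le_q by (intro add_mono mult_left_mono) auto
    then show ?thesis using g_implicit[OF ab(1,2)] by (simp add: algebra_simps)
  qed
  then have "q \<le> (\<Lambda> + (L0 + L1) * \<alpha>) * h + (C0 + C1) * q"
    using ts unfolding q_def by (intro cSUP_least) (auto simp: Q_def h_def)
  then have "q \<le> (\<Lambda> + (L0 + L1) * \<alpha>) / (1 - C0 - C1) * h"
    using contraction by (simp add: field_simps)
  also have "\<dots> \<le> mu * h" using mu by (rule mult_right_mono) (simp add: h_def)
  finally show ?thesis using le_q[OF ts] by (simp add: h_def)
qed

section \<open>Joint Lipschitz continuity of \<open>H\<close> on the neighbourhood\<close>

definition tuple_norm ::
    "('v::real_vector \<Rightarrow> real) \<Rightarrow> real \<times> 'v \<times> 'v \<times> 'v \<times> 'v \<Rightarrow> real" where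
  "tuple_norm nrm X = (case X of (t, z0, z1, x0, x1) \<Rightarrow>
     \<bar>t\<bar> + nrm z0 + nrm z1 + nrm x0 + nrm x1)"

definition weighted_tuple_norm :: "('v::real_vector \<Rightarrow> real) \<Rightarrow> real \<Rightarrow> real \<Rightarrow> real \<Rightarrow> real
    \<Rightarrow> real \<Rightarrow> real \<times> 'v \<times> 'v \<times> 'v \<times> 'v \<Rightarrow> real" where
  "weighted_tuple_norm nrm \<Lambda> L0 L1 C0 C1 X = (case X of (t, z0, z1, x0, x1) \<Rightarrow>
     \<Lambda> * \<bar>t\<bar> + L0 * nrm z0 + L1 * nrm z1 + C0 * nrm x0 + C1 * nrm x1)"

definition base_point :: "'v::real_vector \<Rightarrow> real \<times> 'v \<times> 'v \<times> 'v \<times> 'v" where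
  "base_point P = (0, 0, 0, P, P)"

definition uncurry5 ::
    "(real \<Rightarrow> 'v \<Rightarrow> 'v \<Rightarrow> 'v \<Rightarrow> 'v \<Rightarrow> 'w) \<Rightarrow> real \<times> 'v \<times> 'v \<times> 'v \<times> 'v \<Rightarrow> 'w" where
  "uncurry5 H X = (case X of (t, z0, z1, x0, x1) \<Rightarrow> H t z0 z1 x0 x1)"

lemma mem_Nbhd_iff: "X \<in> Nbhd nrm P eps \<longleftrightarrow> tuple_norm nrm (X - base_point P) \<le> eps"
  by (cases X) (simp add: Nbhd_def tuple_norm_def base_point_def)

context
  fixes nrm :: "'v::real_vector \<Rightarrow> real"
  assumes norm: "is_norm nrm"
begin

lemma tuple_norm_nonneg: "tuple_norm nrm X \<ge> 0"
  by (cases X) (simp add: tuple_norm_def is_norm_nonneg[OF norm] add_nonneg_nonneg)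

lemma tuple_norm_scaleR: "tuple_norm nrm (c *\<^sub>R X) = \<bar>c\<bar> * tuple_norm nrm X"
  by (cases X) (simp add: tuple_norm_def is_norm_scaleR[OF norm] algebra_simps abs_mult)

lemma tuple_norm_triangle: "tuple_norm nrm (X + Y) \<le> tuple_norm nrm X + tuple_norm nrm Y"
proof -
  obtain t z0 z1 x0 x1 where X: "X = (t, z0, z1, x0, x1)" by (cases X) auto
  obtain s y0 y1 u0 u1 where Y: "Y = (s, y0, y1, u0, u1)" by (cases Y) auto
  show ?thesis
    using is_norm_triangle[OF norm, of z0 y0] is_norm_triangle[OF norm, of z1 y1]
      is_norm_triangle[OF norm, of x0 u0] is_norm_triangle[OF norm, of x1 u1] abs_triangle_ineq[of t s]
    by (simp add: X Y tuple_norm_def)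
qed

lemma tuple_norm_ball_convex:
  assumes X: "tuple_norm nrm (X - C) \<le> R" and Y: "tuple_norm nrm (Y - C) \<le> R"
    and l: "0 \<le> l" "l \<le> 1"
  shows "tuple_norm nrm (X + l *\<^sub>R (Y - X) - C) \<le> R"
proof -
  have "X + l *\<^sub>R (Y - X) - C = (1 - l) *\<^sub>R (X - C) + l *\<^sub>R (Y - C)"
    by (simp add: algebra_simps)
  then have "tuple_norm nrm (X + l *\<^sub>R (Y - X) - C)
      \<le> (1 - l) * tuple_norm nrm (X - C) + l * tuple_norm nrm (Y - C)"
    using tuple_norm_triangle[of "(1 - l) *\<^sub>R (X - C)" "l *\<^sub>R (Y - C)"] l
    by (simp add: tuple_norm_scaleR)
  also have "\<dots> \<le> (1 - l) * R + l * R"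
    using l X Y by (intro add_mono mult_left_mono) auto
  finally show ?thesis by (simp add: algebra_simps)
qed

lemma weighted_tuple_norm_scaleR:
  "weighted_tuple_norm nrm \<Lambda> L0 L1 C0 C1 (c *\<^sub>R X) = \<bar>c\<bar> * weighted_tuple_norm nrm \<Lambda> L0 L1 C0 C1 X"
  by (cases X) (simp add: weighted_tuple_norm_def is_norm_scaleR[OF norm] algebra_simps abs_mult)

lemma weighted_tuple_norm_le:
  assumes "\<Lambda> \<ge> 0" "L0 \<ge> 0" "L1 \<ge> 0" "C0 \<ge> 0" "C1 \<ge> 0"
  shows "0 \<le> weighted_tuple_norm nrm \<Lambda> L0 L1 C0 C1 X"
    and "weighted_tuple_norm nrm \<Lambda> L0 L1 C0 C1 X \<le> (\<Lambda> + L0 + L1 + C0 + C1) * tuple_norm nrm X"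
proof -
  obtain t z0 z1 x0 x1 where X: "X = (t, z0, z1, x0, x1)" by (cases X) auto
  let ?K = "\<Lambda> + L0 + L1 + C0 + C1"
  have "\<Lambda> * \<bar>t\<bar> \<le> ?K * \<bar>t\<bar>" "L0 * nrm z0 \<le> ?K * nrm z0" "L1 * nrm z1 \<le> ?K * nrm z1"
    "C0 * nrm x0 \<le> ?K * nrm x0" "C1 * nrm x1 \<le> ?K * nrm x1"
    using assms by (intro mult_right_mono; simp add: is_norm_nonneg[OF norm])+
  then show "weighted_tuple_norm nrm \<Lambda> L0 L1 C0 C1 X \<le> ?K * tuple_norm nrm X"
    by (simp add: X weighted_tuple_norm_def tuple_norm_def algebra_simps)
  show "0 \<le> weighted_tuple_norm nrm \<Lambda> L0 L1 C0 C1 X"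
    using assms by (simp add: X weighted_tuple_norm_def is_norm_nonneg[OF norm])
qed

end

locale Nbhd_lipschitz =
  fixes nrm :: "'v::euclidean_space \<Rightarrow> real"
    and H :: "real \<Rightarrow> 'v \<Rightarrow> 'v \<Rightarrow> 'v \<Rightarrow> 'v \<Rightarrow> 'v"
    and U :: "(real \<times> 'v \<times> 'v \<times> 'v \<times> 'v) set"
    and P :: 'v
    and eps \<Lambda> L0 L1 C0 C1 :: real
  assumes norm: "is_norm nrm"
    and U_open: "open U"
    and H_cont: "continuous_on U (\<lambda>(t, z0, z1, x0, x1). H t z0 z1 x0 x1)"
    and N_sub: "Nbhd nrm P eps \<subseteq> U"
    and eps_pos: "eps > 0"
    and consts_nonneg: "\<Lambda> \<ge> 0" "L0 \<ge> 0" "L1 \<ge> 0" "C0 \<ge> 0" "C1 \<ge> 0"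
    and Lip_t: "\<And>t s z0 z1 x0 x1. (t, z0, z1, x0, x1) \<in> Nbhd nrm P eps \<Longrightarrow>
        (s, z0, z1, x0, x1) \<in> Nbhd nrm P eps \<Longrightarrow>
        nrm (H s z0 z1 x0 x1 - H t z0 z1 x0 x1) \<le> \<Lambda> * \<bar>s - t\<bar>"
    and Lip_z: "\<And>t z0 z1 y0 y1 x0 x1. (t, z0, z1, x0, x1) \<in> Nbhd nrm P eps \<Longrightarrow>
        (t, y0, y1, x0, x1) \<in> Nbhd nrm P eps \<Longrightarrow>
        nrm (H t y0 y1 x0 x1 - H t z0 z1 x0 x1) \<le> L0 * nrm (y0 - z0) + L1 * nrm (y1 - z1)"
    and Lip_x: "\<And>t z0 z1 x0 x1 y0 y1. (t, z0, z1, x0, x1) \<in> Nbhd nrm P eps \<Longrightarrow>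
        (t, z0, z1, y0, y1) \<in> Nbhd nrm P eps \<Longrightarrow>
        nrm (H t z0 z1 y0 y1 - H t z0 z1 x0 x1) \<le> C0 * nrm (y0 - x0) + C1 * nrm (y1 - x1)"
begin

abbreviation weight :: "real \<times> 'v \<times> 'v \<times> 'v \<times> 'v \<Rightarrow> real" where
  "weight \<equiv> weighted_tuple_norm nrm \<Lambda> L0 L1 C0 C1"

text \<open>The room of size \<open>tuple_norm nrm (Y - X)\<close> around both points keeps the intermediate
  points, where first the time and then the \<open>z\<close>-components of \<open>X\<close> are replaced by those of \<open>Y\<close>,
  inside the neighbourhood, so that the three partial Lipschitz conditions can be chained.\<close>

lemma uncurry5_lipschitz_with_room:
  assumes "tuple_norm nrm (X - base_point P) + tuple_norm nrm (Y - X) \<le> eps"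
    and "tuple_norm nrm (Y - base_point P) + tuple_norm nrm (Y - X) \<le> eps"
  shows "nrm (uncurry5 H Y - uncurry5 H X) \<le> weight (Y - X)"
proof -
  obtain t z0 z1 x0 x1 where X: "X = (t, z0, z1, x0, x1)" by (cases X) auto
  obtain s y0 y1 u0 u1 where Y: "Y = (s, y0, y1, u0, u1)" by (cases Y) auto
  let ?D = "\<bar>s - t\<bar> + nrm (y0 - z0) + nrm (y1 - z1) + nrm (u0 - x0) + nrm (u1 - x1)"
  have room_X: "\<bar>t\<bar> + nrm z0 + nrm z1 + nrm (x0 - P) + nrm (x1 - P) + ?D \<le> eps"
    and room_Y: "\<bar>s\<bar> + nrm y0 + nrm y1 + nrm (u0 - P) + nrm (u1 - P) + ?D \<le> eps"
    using assms by (simp_all add: X Y tuple_norm_def base_point_def)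
  have "0 \<le> nrm (y0 - z0)" "0 \<le> nrm (y1 - z1)" "0 \<le> nrm (u0 - x0)" "0 \<le> nrm (u1 - x1)"
    by (simp_all add: is_norm_nonneg[OF norm])
  moreover have "\<bar>s\<bar> \<le> \<bar>t\<bar> + \<bar>s - t\<bar>" by simp
  moreover have "nrm (x0 - P) \<le> nrm (u0 - P) + nrm (u0 - x0)" "nrm (x1 - P) \<le> nrm (u1 - P) + nrm (u1 - x1)"
    using is_norm_triangle_diff[OF norm, of x0 P u0] is_norm_triangle_diff[OF norm, of x1 P u1]
      is_norm_minus_commute[OF norm, of x0 u0] is_norm_minus_commute[OF norm, of x1 u1] by linarith+
  ultimately have in_N: "(t, z0, z1, x0, x1) \<in> Nbhd nrm P eps" "(s, y0, y1, u0, u1) \<in> Nbhd nrm P eps"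
      "(s, z0, z1, x0, x1) \<in> Nbhd nrm P eps" "(s, y0, y1, x0, x1) \<in> Nbhd nrm P eps"
    using room_X room_Y by (simp_all add: Nbhd_def)
  have "nrm (H s y0 y1 u0 u1 - H t z0 z1 x0 x1) \<le> nrm (H s y0 y1 u0 u1 - H s y0 y1 x0 x1)
      + nrm (H s y0 y1 x0 x1 - H s z0 z1 x0 x1) + nrm (H s z0 z1 x0 x1 - H t z0 z1 x0 x1)"
    using is_norm_triangle_diff[OF norm, of "H s y0 y1 u0 u1" "H t z0 z1 x0 x1" "H s y0 y1 x0 x1"]
      is_norm_triangle_diff[OF norm, of "H s y0 y1 x0 x1" "H t z0 z1 x0 x1" "H s z0 z1 x0 x1"]
    by linarith
  also have "\<dots> \<le> (C0 * nrm (u0 - x0) + C1 * nrm (u1 - x1)) + (L0 * nrm (y0 - z0) + L1 * nrm (y1 - z1))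
      + \<Lambda> * \<bar>s - t\<bar>"
    using in_N by (intro add_mono Lip_x Lip_z Lip_t)
  finally show ?thesis by (simp add: X Y uncurry5_def weighted_tuple_norm_def)
qed

text \<open>Inside the shrunken neighbourhood the segment from \<open>X\<close> to \<open>Y\<close> is cut into \<open>m\<close> pieces so short
  that each of them has room in the sense above; the estimates then telescope.\<close>

lemma uncurry5_lipschitz_shrunk:
  assumes X: "tuple_norm nrm (X - base_point P) \<le> r * eps"
    and Y: "tuple_norm nrm (Y - base_point P) \<le> r * eps"
    and r: "0 \<le> r" "r < 1"
  shows "nrm (uncurry5 H Y - uncurry5 H X) \<le> weight (Y - X)"
proof -
  define seg where "seg l = X + l *\<^sub>R (Y - X)" for l :: real
  have seg_in: "tuple_norm nrm (seg l - base_point P) \<le> r * eps" if "0 \<le> l" "l \<le> 1" for l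
    unfolding seg_def by (rule tuple_norm_ball_convex[OF norm X Y that])
  obtain m :: nat where m: "tuple_norm nrm (Y - X) / ((1 - r) * eps) < m"
    using reals_Archimedean2 by blast
  have "(1 - r) * eps > 0" using r eps_pos by simp
  then have "0 < real m"
    using m tuple_norm_nonneg[OF norm, of "Y - X"] by (meson divide_nonneg_pos le_less_trans)
  then have "m > 0" and step: "tuple_norm nrm (Y - X) / m \<le> (1 - r) * eps"
    using m \<open>(1 - r) * eps > 0\<close> by (auto simp: field_simps)
  have seg_step: "seg ((k + 1) / m) - seg (k / m) = (1 / m) *\<^sub>R (Y - X)" for k :: nat
    by (simp add: seg_def algebra_simps add_divide_distrib)
  have "nrm (uncurry5 H (seg (k / m)) - uncurry5 H X) \<le> k / m * weight (Y - X)" if "k \<le> m" for k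
    using that
  proof (induction k)
    case 0
    then show ?case by (simp add: seg_def is_norm_zero[OF norm])
  next
    case (Suc k)
    have a: "0 \<le> k / m" "k / m \<le> 1" and b: "0 \<le> (k + 1) / m" "(k + 1) / m \<le> 1"
      using Suc.prems \<open>m > 0\<close> by auto
    let ?d = "seg ((k + 1) / m) - seg (k / m)"
    have "tuple_norm nrm ?d = tuple_norm nrm (Y - X) / m" "weight ?d = weight (Y - X) / m"
      using \<open>m > 0\<close>
      by (simp_all only: seg_step tuple_norm_scaleR[OF norm] weighted_tuple_norm_scaleR[OF norm]) simp_all
    then have "nrm (uncurry5 H (seg ((k + 1) / m)) - uncurry5 H (seg (k / m))) \<le> weight (Y - X) / m"
      using uncurry5_lipschitz_with_room[of "seg (k / m)" "seg ((k + 1) / m)"]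
        seg_in[OF a] seg_in[OF b] step
      by (simp add: algebra_simps)
    moreover have "k / m * weight (Y - X) + weight (Y - X) / m = (k + 1) / m * weight (Y - X)"
      using \<open>m > 0\<close> by (simp add: field_simps)
    ultimately show ?case
      using Suc is_norm_triangle_diff[OF norm, of "uncurry5 H (seg ((k + 1) / m))" "uncurry5 H X"
          "uncurry5 H (seg (k / m))"]
      by (simp add: add.commute)
  qed
  from this[of m] \<open>m > 0\<close> show ?thesis by (simp add: seg_def)
qed

text \<open>Shrink both points towards \<open>base_point P\<close> by a factor \<open>r < 1\<close> and let \<open>r \<rightarrow> 1\<close>,
  using the continuity of \<open>H\<close> on the neighbourhood.\<close>

lemma uncurry5_lipschitz_Nbhd:
  assumes X: "X \<in> Nbhd nrm P eps" and Y: "Y \<in> Nbhd nrm P eps"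
  shows "nrm (uncurry5 H Y - uncurry5 H X) \<le> weight (Y - X)"
proof -
  define shrink where "shrink r Z = base_point P + r *\<^sub>R (Z - base_point P)" for r Z
  have shrunk: "nrm (uncurry5 H (shrink r Y) - uncurry5 H (shrink r X)) \<le> weight (Y - X)"
    if r: "0 < r" "r < 1" for r
  proof -
    have "nrm (uncurry5 H (shrink r Y) - uncurry5 H (shrink r X)) \<le> weight (shrink r Y - shrink r X)"
      using X Y r
      by (intro uncurry5_lipschitz_shrunk[where r = r])
         (simp_all add: shrink_def mem_Nbhd_iff tuple_norm_scaleR[OF norm])
    also have "shrink r Y - shrink r X = r *\<^sub>R (Y - X)" by (simp add: shrink_def algebra_simps)
    also have "weight (r *\<^sub>R (Y - X)) \<le> weight (Y - X)"
      using r weighted_tuple_norm_le(1)[OF norm consts_nonneg, of "Y - X"]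
      by (simp add: weighted_tuple_norm_scaleR[OF norm] mult_left_le_one_le)
    finally show ?thesis .
  qed
  have lim: "((\<lambda>r. uncurry5 H (shrink r Z)) \<longlongrightarrow> uncurry5 H Z) (at_left 1)"
    if Z: "Z \<in> Nbhd nrm P eps" for Z
  proof -
    have "uncurry5 H = (\<lambda>(t, z0, z1, x0, x1). H t z0 z1 x0 x1)"
      by (simp add: uncurry5_def fun_eq_iff)
    moreover have "Z \<in> U" using Z N_sub by blast
    ultimately have "isCont (uncurry5 H) Z"
      using H_cont U_open continuous_on_eq_continuous_at by metis
    moreover have "((\<lambda>r. base_point P + r *\<^sub>R (Z - base_point P))
        \<longlongrightarrow> base_point P + 1 *\<^sub>R (Z - base_point P)) (at_left 1)"
      by (intro tendsto_intros)
    then have "((\<lambda>r. shrink r Z) \<longlongrightarrow> Z) (at_left 1)" by (simp add: shrink_def)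
    ultimately show ?thesis by (rule isCont_tendsto_compose)
  qed
  have "((\<lambda>r. nrm (uncurry5 H (shrink r Y) - uncurry5 H (shrink r X)))
      \<longlongrightarrow> nrm (uncurry5 H Y - uncurry5 H X)) (at_left 1)"
    by (intro tendsto_is_norm[OF norm] tendsto_diff lim X Y)
  moreover have "\<forall>\<^sub>F r in at_left 1. nrm (uncurry5 H (shrink r Y) - uncurry5 H (shrink r X)) \<le> weight (Y - X)"
    using eventually_at_left_real[of 0 1] by (rule eventually_mono) (use shrunk in auto)
  ultimately show ?thesis by (rule tendsto_upperbound) simp
qed

lemma H_lipschitz_Nbhd:
  assumes "(t, z0, z1, x0, x1) \<in> Nbhd nrm P eps" "(s, y0, y1, u0, u1) \<in> Nbhd nrm P eps"
  shows "nrm (H s y0 y1 u0 u1 - H t z0 z1 x0 x1) \<le> \<Lambda> * \<bar>s - t\<bar>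
    + L0 * nrm (y0 - z0) + L1 * nrm (y1 - z1) + C0 * nrm (u0 - x0) + C1 * nrm (u1 - x1)"
  using uncurry5_lipschitz_Nbhd[OF assms] by (simp add: uncurry5_def weighted_tuple_norm_def)

lemma base_point_mem_Nbhd: "base_point P \<in> Nbhd nrm P eps"
  using eps_pos by (simp add: Nbhd_def base_point_def is_norm_zero[OF norm])

definition alpha :: real where
  "alpha = (SUP X\<in>Nbhd nrm P eps. nrm (uncurry5 H X))"

lemma norm_uncurry5_le_alpha:
  assumes "X \<in> Nbhd nrm P eps"
  shows "nrm (uncurry5 H X) \<le> alpha"
proof -
  have "nrm (uncurry5 H Z) \<le> nrm (uncurry5 H (base_point P)) + (\<Lambda> + L0 + L1 + C0 + C1) * eps"
    if Z: "Z \<in> Nbhd nrm P eps" for Z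
  proof -
    have "nrm (uncurry5 H Z - uncurry5 H (base_point P)) \<le> weight (Z - base_point P)"
      by (rule uncurry5_lipschitz_Nbhd[OF base_point_mem_Nbhd Z])
    also have "\<dots> \<le> (\<Lambda> + L0 + L1 + C0 + C1) * tuple_norm nrm (Z - base_point P)"
      by (rule weighted_tuple_norm_le(2)[OF norm consts_nonneg])
    also have "\<dots> \<le> (\<Lambda> + L0 + L1 + C0 + C1) * eps"
      using Z consts_nonneg by (intro mult_left_mono) (simp_all add: mem_Nbhd_iff)
    finally show ?thesis
      using is_norm_triangle_ineq[OF norm, of "uncurry5 H Z" "uncurry5 H (base_point P)"] by linarith
  qed
  then have "bdd_above ((\<lambda>X. nrm (uncurry5 H X)) ` Nbhd nrm P eps)"
    by (intro bdd_aboveI2) blast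
  then show ?thesis unfolding alpha_def by (rule cSUP_upper[OF assms])
qed

lemma alpha_nonneg: "alpha \<ge> 0"
  using norm_uncurry5_le_alpha[OF base_point_mem_Nbhd] is_norm_nonneg[OF norm, of "uncurry5 H (base_point P)"]
  by linarith

end

theorem lemma4p5:
  fixes nrm :: "real^'n \<Rightarrow> real"
    and H :: "real \<Rightarrow> real^'n \<Rightarrow> real^'n \<Rightarrow> real^'n \<Rightarrow> real^'n \<Rightarrow> real^'n"
    and U :: "(real \<times> (real^'n) \<times> (real^'n) \<times> (real^'n) \<times> (real^'n)) set"
    and P :: "real^'n" and i1 :: 'n
    and eps \<Lambda> L0 L1 C0 C1 mu delta :: real
    and W W' :: "real \<Rightarrow> real^'n"
  assumes norm: "is_norm nrm"
    and U_open: "open U"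
    and H_cont: "continuous_on U (\<lambda>(t, z0, z1, x0, x1). H t z0 z1 x0 x1)"
    and P_fix: "P = H 0 0 0 P P"
    and P1: "\<bar>P $ i1\<bar> \<le> 1"
    and eps_pos: "eps > 0"
    and N_sub: "Nbhd nrm P eps \<subseteq> U"
    and consts_nonneg: "\<Lambda> \<ge> 0" "L0 \<ge> 0" "L1 \<ge> 0" "C0 \<ge> 0" "C1 \<ge> 0"
    and Lip_t: "\<And>t s z0 z1 x0 x1. (t, z0, z1, x0, x1) \<in> Nbhd nrm P eps \<Longrightarrow>
        (s, z0, z1, x0, x1) \<in> Nbhd nrm P eps \<Longrightarrow>
        nrm (H s z0 z1 x0 x1 - H t z0 z1 x0 x1) \<le> \<Lambda> * \<bar>s - t\<bar>"
    and Lip_z: "\<And>t z0 z1 y0 y1 x0 x1. (t, z0, z1, x0, x1) \<in> Nbhd nrm P eps \<Longrightarrow>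
        (t, y0, y1, x0, x1) \<in> Nbhd nrm P eps \<Longrightarrow>
        nrm (H t y0 y1 x0 x1 - H t z0 z1 x0 x1) \<le> L0 * nrm (y0 - z0) + L1 * nrm (y1 - z1)"
    and Lip_x: "\<And>t z0 z1 x0 x1 y0 y1. (t, z0, z1, x0, x1) \<in> Nbhd nrm P eps \<Longrightarrow>
        (t, z0, z1, y0, y1) \<in> Nbhd nrm P eps \<Longrightarrow>
        nrm (H t z0 z1 y0 y1 - H t z0 z1 x0 x1) \<le> C0 * nrm (y0 - x0) + C1 * nrm (y1 - x1)"
    and C_lt: "C0 + C1 < 1"
    and h1_bound: "\<And>t z0 z1 x0 x1. (t, z0, z1, x0, x1) \<in> Nbhd nrm P eps \<Longrightarrow>
        \<bar>H t z0 z1 x0 x1 $ i1\<bar> \<le> 1"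
    and mu_ge: "mu \<ge> (\<Lambda> + (L0 + L1) *
        (SUP X\<in>Nbhd nrm P eps. nrm (case X of (t, z0, z1, x0, x1) \<Rightarrow> H t z0 z1 x0 x1)))
        / (1 - C0 - C1)"
    and delta_pos: "delta > 0"
    and W_C1: "C1_on delta W W'"
    and w1_range: "\<And>t. t \<in> {-delta..delta} \<Longrightarrow> W t $ i1 \<in> {-delta..delta}"
    and W_eq: "\<And>t. t \<in> {-delta..delta} \<Longrightarrow>
        W' t = H t (W t) (W (W t $ i1)) (W' t) (W' (W t $ i1))"
    and W0: "W 0 = 0" and W'0: "W' 0 = P"
    and W_in: "\<And>t. t \<in> {-delta..delta} \<Longrightarrow>
        (t, W t, W (W t $ i1), W' t, W' (W t $ i1)) \<in> Nbhd nrm P eps"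
  shows "classC nrm P eps
           (SUP X\<in>Nbhd nrm P eps. nrm (case X of (t, z0, z1, x0, x1) \<Rightarrow> H t z0 z1 x0 x1))
           mu i1 delta W"
proof -
  interpret Nbhd_lipschitz nrm H U P eps \<Lambda> L0 L1 C0 C1
    by unfold_locales (use assms in auto)
  let ?I = "{-delta..delta}"
  have alpha_eq: "alpha = (SUP X\<in>Nbhd nrm P eps. nrm (case X of (t, z0, z1, x0, x1) \<Rightarrow> H t z0 z1 x0 x1))"
    by (simp add: alpha_def uncurry5_def)
  have deriv: "\<And>u. u \<in> ?I \<Longrightarrow> (W has_vector_derivative W' u) (at u within ?I)"
    using W_C1 by (simp add: C1_on_def)
  have W'_le: "nrm (W' u) \<le> alpha" and w1'_le: "\<bar>W' u $ i1\<bar> \<le> 1" if "u \<in> ?I" for u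
    using norm_uncurry5_le_alpha[OF W_in[OF that]] h1_bound[OF W_in[OF that]]
    by (simp_all add: uncurry5_def flip: W_eq[OF that])
  have w1_lip: "\<bar>W t $ i1 - W s $ i1\<bar> \<le> \<bar>t - s\<bar>" if "t \<in> ?I" "s \<in> ?I" for t s
    using vec_nth_mean_value_bound[OF deriv w1'_le that] by simp
  have W_lip: "nrm (W t - W s) \<le> alpha * \<bar>t - s\<bar>" if "t \<in> ?I" "s \<in> ?I" for t s
    using is_norm_mean_value_bound[OF norm deriv W'_le that] .
  have W'_implicit: "nrm (W' a - W' b) \<le> \<Lambda> * \<bar>a - b\<bar> + L0 * nrm (W a - W b)
      + L1 * nrm (W (W a $ i1) - W (W b $ i1)) + C0 * nrm (W' a - W' b)
      + C1 * nrm (W' (W a $ i1) - W' (W b $ i1))" if "a \<in> ?I" "b \<in> ?I" for a b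
    using H_lipschitz_Nbhd[OF W_in[OF that(2)] W_in[OF that(1)]]
    unfolding W_eq[OF that(1), symmetric] W_eq[OF that(2), symmetric] .
  have mu_bound: "(\<Lambda> + (L0 + L1) * alpha) / (1 - C0 - C1) \<le> mu"
    using mu_ge by (simp add: alpha_eq)
  note W'_lip = lipschitz_from_implicit_bound[where \<sigma> = "\<lambda>u. W u $ i1",
      OF w1_range w1_lip W_lip is_norm_diff_le[OF norm W'_le W'_le] W'_implicit
      alpha_nonneg consts_nonneg C_lt mu_bound]
  have "0 \<in> ?I" using delta_pos by simp
  then show ?thesis
    unfolding classC_def alpha_eq[symmetric]
    by (intro exI[of _ W'] conjI ballI W_C1 W0 W'0 W_lip w1_lip W'_lip W_in)
       (use w1_lip[of _ 0] W0 in auto)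
qed

end
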